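(* Let $q=2^m\geq 4$ and let $l$ be an integer with $q-4\leq l\leq q-1$. Then there exists a linear $l$-intersection pair of two MDS codes over $\mathbb{F}_q$ both with parameters $[q+2,q-1,4]_q$.
   Context: An $[n,k,d]_q$ linear code is a $k$-dimensional subspace of $\mathbb{F}_q^n$ with minimum Hamming distance $d$; it is MDS if $d=n-k+1$. Two linear codes $C_1,C_2\subseteq\mathbb{F}_q^n$ form a linear $l$-intersection pair if $\dim(C_1\cap C_2)=l$. *)

theory Defs
  imports Complex_Main "HOL-Library.Function_Algebras"
begin

text \<open>Vectors of F_q^n are modelled as functions nat => 'a vanishing outside {0..<n}.\<close>

definition vscale :: "'a::field \<Rightarrow> (nat \<Rightarrow> 'a) \<Rightarrow> (nat \<Rightarrow> 'a)" where
  "vscale c v = (\<lambda>i. c * v i)"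

definition fvecs :: "nat \<Rightarrow> (nat \<Rightarrow> 'a::zero) set" where
  "fvecs n = {v. \<forall>i\<ge>n. v i = 0}"

definition hamming_dist :: "nat \<Rightarrow> (nat \<Rightarrow> 'a) \<Rightarrow> (nat \<Rightarrow> 'a) \<Rightarrow> nat" where
  "hamming_dist n u v = card {i. i < n \<and> u i \<noteq> v i}"

definition min_dist :: "nat \<Rightarrow> (nat \<Rightarrow> 'a) set \<Rightarrow> nat" where
  "min_dist n C = Min {hamming_dist n u v | u v. u \<in> C \<and> v \<in> C \<and> u \<noteq> v}"

definition code_dim :: "(nat \<Rightarrow> 'a::field) set \<Rightarrow> nat" where
  "code_dim C = Vector_Spaces.vector_space.dim vscale C"

definition linear_code :: "nat \<Rightarrow> nat \<Rightarrow> nat \<Rightarrow> (nat \<Rightarrow> 'a::field) set \<Rightarrow> bool" where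
  "linear_code n k d C \<longleftrightarrow> C \<subseteq> fvecs n \<and> module.subspace vscale C
     \<and> code_dim C = k \<and> min_dist n C = d"

definition is_MDS :: "nat \<Rightarrow> (nat \<Rightarrow> 'a::field) set \<Rightarrow> bool" where
  "is_MDS n C \<longleftrightarrow> min_dist n C = n - code_dim C + 1"

definition l_intersection_pair :: "nat \<Rightarrow> (nat \<Rightarrow> 'a::field) set \<Rightarrow> (nat \<Rightarrow> 'a) set \<Rightarrow> bool" where
  "l_intersection_pair l C1 C2 \<longleftrightarrow> code_dim (C1 \<inter> C2) = l"

end

theory Submission
  imports Defs
begin

text \<open>Take the code with parity-check columns \<open>\<mu>\<^sub>i (1, e\<^sub>i, e\<^sub>i\<^sup>2)\<close> for \<open>i < q\<close>,
  with nonzero \<open>\<mu>\<^sub>i\<close> and distinct \<open>e\<^sub>i\<close>, together with \<open>(0, 1, 0)\<close> and \<open>(0, 0, 1)\<close>.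
  In characteristic 2 any three of these columns are independent: three columns of the first
  kind form a Vandermonde matrix, and two of them with a unit vector are independent because
  \<open>e\<^sub>a\<^sup>2 - e\<^sub>b\<^sup>2 = (e\<^sub>a - e\<^sub>b)\<^sup>2 \<noteq> 0\<close>. Hence the code is a \<open>[q+2, q-1, 4]\<close> MDS code.
  Rescaling \<open>\<mu>\<close> by some \<open>\<kappa> \<notin> {0, 1}\<close> on a set \<open>T\<close> of at most three positions gives a
  second such code; a common codeword restricted to \<open>T\<close> satisfies three Vandermonde equations,
  so it vanishes on \<open>T\<close>. The intersection is therefore the subcode vanishing on \<open>T\<close>, of dimension
  \<open>q - 1 - |T|\<close>, and \<open>|T| = 0, \<dots>, 3\<close> realises every \<open>l\<close> from \<open>q - 4\<close> to \<open>q - 1\<close>.\<close>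

interpretation fv: vector_space "vscale :: 'a::field \<Rightarrow> (nat \<Rightarrow> 'a) \<Rightarrow> _"
  by unfold_locales (auto simp: vscale_def fun_eq_iff algebra_simps)

lemma of_nat_card_eq_0: "of_nat (card (UNIV :: 'a::{ring_1,finite} set)) = (0::'a)"
proof -
  have "(\<Sum>x\<in>(UNIV::'a set). x + 1) = (\<Sum>x\<in>UNIV. x)"
    by (rule sum.reindex_bij_witness[where i="\<lambda>x. x - 1" and j="\<lambda>x. x + 1"]) auto
  then show ?thesis by (simp add: sum.distrib)
qed

lemma char_two_of_card:
  assumes "card (UNIV :: 'a::{field,finite} set) = 2 ^ m" "m > 0"
  shows "(2::'a) = 0"
proof -
  have "(2::'a) ^ m = 0" using of_nat_card_eq_0[where 'a='a] assms(1) by simp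
  then show ?thesis by simp
qed

lemma square_diff_char_two:
  fixes x y :: "'a::comm_ring_1"
  assumes "(2::'a) = 0"
  shows "x ^ 2 - y ^ 2 = (x - y) ^ 2"
proof -
  have "x ^ 2 - y ^ 2 = (x - y) ^ 2 + 2 * (x * y - y ^ 2)"
    by (simp add: power2_eq_square algebra_simps)
  then show ?thesis using assms by simp
qed

lemma vandermonde3_eq_0:
  fixes a b c x y z :: "'a::field"
  assumes "x \<noteq> y" "y \<noteq> z" "x \<noteq> z"
    and eq0: "a + b + c = 0" and eq1: "a * x + b * y + c * z = 0"
    and eq2: "a * x ^ 2 + b * y ^ 2 + c * z ^ 2 = 0"
  shows "a = 0 \<and> b = 0 \<and> c = 0"
proof -
  let ?m0 = "a + b + c" and ?m1 = "a * x + b * y + c * z"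
    and ?m2 = "a * x ^ 2 + b * y ^ 2 + c * z ^ 2"
  have "a * ((x - y) * (x - z)) = ?m2 - (y + z) * ?m1 + y * z * ?m0"
    and "b * ((y - x) * (y - z)) = ?m2 - (x + z) * ?m1 + x * z * ?m0"
    and "c * ((z - x) * (z - y)) = ?m2 - (x + y) * ?m1 + x * y * ?m0"
    by (simp_all add: power2_eq_square algebra_simps)
  then show ?thesis using assms by simp
qed

lemma sum_fun_apply: "(sum f A) i = (\<Sum>x\<in>A. f x i)"
  by (induction A rule: infinite_finite_induct) auto

lemma dim_eq_card_coordinates:
  fixes V :: "(nat \<Rightarrow> 'a::field) set"
  assumes sub: "fv.subspace V" and fin: "finite S"
    and b: "\<And>s. s \<in> S \<Longrightarrow> b s \<in> V"
    and delta: "\<And>s t. s \<in> S \<Longrightarrow> t \<in> S \<Longrightarrow> b s t = (if s = t then 1 else 0)"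
    and zero: "\<And>v. v \<in> V \<Longrightarrow> \<forall>s\<in>S. v s = 0 \<Longrightarrow> v = 0"
  shows "fv.dim V = card S"
proof (rule fv.dim_unique[of "b ` S"])
  show "b ` S \<subseteq> V" using b by auto
  have inj: "inj_on b S"
    by (rule inj_onI) (metis delta one_neq_zero)
  then show "card (b ` S) = card S" by (simp add: card_image)
  have coord: "(\<Sum>s\<in>S. vscale (u s) (b s)) t = u t" if "t \<in> S" for u t
  proof -
    have "(\<Sum>s\<in>S. vscale (u s) (b s)) t = (\<Sum>s\<in>S. if s = t then u t else 0)"
      unfolding sum_fun_apply vscale_def by (rule sum.cong) (auto simp: delta that)
    then show ?thesis using fin that by simp
  qed
  show "V \<subseteq> fv.span (b ` S)"
  proof
    fix v assume v: "v \<in> V"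
    define w where "w = (\<Sum>s\<in>S. vscale (v s) (b s))"
    have "w \<in> V" unfolding w_def
      by (intro fv.subspace_sum[OF sub] fv.subspace_scale[OF sub] b)
    moreover have "(v - w) t = 0" if "t \<in> S" for t
      using coord[OF that, of v] by (simp add: w_def)
    ultimately have "v - w = 0"
      by (intro zero fv.subspace_diff[OF sub v]) auto
    moreover have "w \<in> fv.span (b ` S)" unfolding w_def
      by (intro fv.span_sum fv.span_scale fv.span_base) auto
    ultimately show "v \<in> fv.span (b ` S)" by simp
  qed
  show "fv.independent (b ` S)"
  proof
    assume "fv.dependent (b ` S)"
    then obtain u where u: "\<exists>x\<in>b ` S. u x \<noteq> 0" "(\<Sum>x\<in>b ` S. vscale (u x) x) = 0"
      using fv.dependent_finite fin by blast
    then obtain t where t: "t \<in> S" "u (b t) \<noteq> 0" by auto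
    have "0 = (\<Sum>s\<in>S. vscale (u (b s)) (b s)) t"
      using u(2) by (simp add: sum.reindex[OF inj])
    also have "\<dots> = u (b t)" using coord[OF t(1)] .
    finally show False using t by simp
  qed
qed

definition hamming_weight :: "nat \<Rightarrow> (nat \<Rightarrow> 'a::zero) \<Rightarrow> nat" where
  "hamming_weight n v = card {i. i < n \<and> v i \<noteq> 0}"

lemma hamming_dist_eq_weight:
  fixes u v :: "nat \<Rightarrow> 'a::group_add"
  shows "hamming_dist n u v = hamming_weight n (u - v)"
  by (simp add: hamming_dist_def hamming_weight_def)

lemma hamming_weight_le: "hamming_weight n v \<le> n"
  unfolding hamming_weight_def using card_mono[of "{..<n}" "{i. i < n \<and> v i \<noteq> 0}"] by auto

lemma hamming_weight_Suc:
  "hamming_weight (Suc n) v = hamming_weight n v + (if v n = 0 then 0 else 1)"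
proof -
  have "{i. i < Suc n \<and> v i \<noteq> 0}
      = (if v n = 0 then {i. i < n \<and> v i \<noteq> 0} else insert n {i. i < n \<and> v i \<noteq> 0})"
    by (auto simp: less_Suc_eq)
  then show ?thesis by (simp add: hamming_weight_def)
qed

lemma min_dist_eqI:
  fixes C :: "(nat \<Rightarrow> 'a::field) set"
  assumes sub: "fv.subspace C" and w: "w \<in> C" "w \<noteq> 0" "hamming_weight n w = d"
    and lb: "\<And>v. v \<in> C \<Longrightarrow> v \<noteq> 0 \<Longrightarrow> d \<le> hamming_weight n v"
  shows "min_dist n C = d"
  unfolding min_dist_def
proof (rule Min_eqI)
  let ?D = "{hamming_dist n u v |u v. u \<in> C \<and> v \<in> C \<and> u \<noteq> v}"
  show "finite ?D"
    by (rule finite_subset[of _ "{..n}"]) (auto simp: hamming_dist_eq_weight hamming_weight_le)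
  show "d \<le> y" if "y \<in> ?D" for y
    using that lb fv.subspace_diff[OF sub] by (auto simp: hamming_dist_eq_weight)
  have "hamming_dist n w 0 = d" using w by (simp add: hamming_dist_eq_weight)
  then show "d \<in> ?D" using w fv.subspace_0[OF sub] by blast
qed

text \<open>The parity-check equations of the code described above, solved for the last two
  coordinates \<open>q\<close> and \<open>q + 1\<close>.\<close>

definition ext_code :: "nat \<Rightarrow> (nat \<Rightarrow> 'a) \<Rightarrow> (nat \<Rightarrow> 'a::field) \<Rightarrow> (nat \<Rightarrow> 'a) set" where
  "ext_code q e \<mu> = {v \<in> fvecs (q + 2). (\<Sum>i<q. \<mu> i * v i) = 0
     \<and> v q = - (\<Sum>i<q. \<mu> i * e i * v i) \<and> v (Suc q) = - (\<Sum>i<q. \<mu> i * e i ^ 2 * v i)}"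

lemma subspace_ext_code: "fv.subspace (ext_code q e \<mu>)"
proof (rule fv.subspaceI)
  have add: "(\<Sum>i<q. f i * (x i + y i)) = (\<Sum>i<q. f i * x i) + (\<Sum>i<q. f i * y i)"
    and scale: "(\<Sum>i<q. f i * (c * x i)) = c * (\<Sum>i<q. f i * x i)"
    for f x y :: "nat \<Rightarrow> 'a" and c
    by (simp_all add: distrib_left sum.distrib sum_distrib_left mult.left_commute)
  show "0 \<in> ext_code q e \<mu>" by (simp add: ext_code_def fvecs_def)
  show "x + y \<in> ext_code q e \<mu>" if "x \<in> ext_code q e \<mu>" "y \<in> ext_code q e \<mu>" for x y
    using that by (simp add: ext_code_def fvecs_def add)
  show "vscale c x \<in> ext_code q e \<mu>" if "x \<in> ext_code q e \<mu>" for c x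
    using that by (simp add: ext_code_def fvecs_def vscale_def scale)
qed

lemma ext_code_eq_0:
  assumes v: "v \<in> ext_code q e \<mu>" and head: "\<And>i. i < q \<Longrightarrow> v i = 0"
  shows "v = 0"
proof
  fix i
  have "v q = 0" "v (Suc q) = 0" using v head by (simp_all add: ext_code_def)
  moreover have "v i = 0" if "q + 2 \<le> i" using v that by (simp add: ext_code_def fvecs_def)
  moreover have "i < q \<or> i = q \<or> i = Suc q \<or> q + 2 \<le> i" by arith
  ultimately show "v i = 0 i" using head by auto
qed

lemma subspace_vanishing:
  "fv.subspace V \<Longrightarrow> fv.subspace {v \<in> V. \<forall>i\<in>T. v i = 0}"
  by (auto simp: fv.subspace_def vscale_def)

lemma sum_lessThan_support:
  fixes v :: "nat \<Rightarrow> 'a::semiring_0"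
  shows "(\<Sum>i<q. f i * v i) = (\<Sum>i | i < q \<and> v i \<noteq> 0. f i * v i)"
  by (rule sum.mono_neutral_right) auto

text \<open>Entry \<open>1\<close> at \<open>s\<close>; the first check equation forces the entry at \<open>r\<close>, the other
  two the entries at \<open>q\<close> and \<open>q + 1\<close>.\<close>

definition pair_word :: "nat \<Rightarrow> (nat \<Rightarrow> 'a) \<Rightarrow> (nat \<Rightarrow> 'a::field) \<Rightarrow> nat \<Rightarrow> nat \<Rightarrow> nat \<Rightarrow> 'a" where
  "pair_word q e \<mu> s r = (\<lambda>i. if i = s then 1 else if i = r then - (\<mu> s / \<mu> r)
     else if i = q then - (\<mu> s * (e s - e r))
     else if i = Suc q then - (\<mu> s * (e s ^ 2 - e r ^ 2)) else 0)"

lemma pair_word_in_ext_code: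
  assumes "s < q" "r < q" "s \<noteq> r" "\<mu> r \<noteq> 0"
  shows "pair_word q e \<mu> s r \<in> ext_code q e \<mu>"
proof -
  let ?w = "pair_word q e \<mu> s r"
  have "(\<Sum>i<q. f i * ?w i) = (\<Sum>i\<in>{s, r}. f i * ?w i)" for f
    using assms by (intro sum.mono_neutral_right) (auto simp: pair_word_def)
  then have sums: "(\<Sum>i<q. f i * ?w i) = f s - f r * \<mu> s / \<mu> r" for f
    using assms by (simp add: pair_word_def)
  show ?thesis
    using assms sums[of \<mu>] sums[of "\<lambda>i. \<mu> i * e i"] sums[of "\<lambda>i. \<mu> i * e i ^ 2"]
    by (simp add: ext_code_def fvecs_def pair_word_def field_simps)
qed

lemma hamming_weight_pair_word:
  fixes \<mu> :: "nat \<Rightarrow> 'a::field"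
  assumes "s < q" "r < q" "s \<noteq> r" "\<mu> s \<noteq> 0" "\<mu> r \<noteq> 0" "e s \<noteq> e r" "(2::'a) = 0"
  shows "hamming_weight (q + 2) (pair_word q e \<mu> s r) = 4"
proof -
  have "{i. i < q + 2 \<and> pair_word q e \<mu> s r i \<noteq> 0} = {s, r, q, Suc q}"
    using assms by (auto simp: pair_word_def square_diff_char_two)
  then show ?thesis using assms by (simp add: hamming_weight_def)
qed

lemma ext_code_tail_of_support_two:
  fixes \<mu> :: "nat \<Rightarrow> 'a::field"
  assumes v: "v \<in> ext_code q e \<mu>" and A: "{i. i < q \<and> v i \<noteq> 0} = {a, b}" "a \<noteq> b"
    and \<mu>: "\<mu> a \<noteq> 0" and e: "e a \<noteq> e b" and two: "(2::'a) = 0"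
  shows "v q \<noteq> 0 \<and> v (Suc q) \<noteq> 0"
proof -
  let ?\<alpha> = "\<mu> a * v a"
  have sums: "(\<Sum>i<q. f i * v i) = f a * v a + f b * v b" for f
    using sum_lessThan_support[where q=q and f=f and v=v] A by simp
  have b: "\<mu> b * v b = - ?\<alpha>"
    using v sums[of \<mu>] by (simp add: ext_code_def add_eq_0_iff)
  have moment: "(\<Sum>i<q. \<mu> i * e i ^ k * v i) = ?\<alpha> * (e a ^ k - e b ^ k)" for k
  proof -
    have "(\<Sum>i<q. \<mu> i * e i ^ k * v i) = e a ^ k * ?\<alpha> + e b ^ k * (\<mu> b * v b)"
      using sums[of "\<lambda>i. \<mu> i * e i ^ k"] by (simp add: algebra_simps)
    then show ?thesis unfolding b by (simp add: algebra_simps)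
  qed
  have "v q = - (?\<alpha> * (e a - e b))" "v (Suc q) = - (?\<alpha> * (e a - e b) ^ 2)"
    using v moment[of 1] moment[of 2] by (simp_all add: ext_code_def square_diff_char_two[OF two])
  moreover have "?\<alpha> \<noteq> 0" using A \<mu> by auto
  ultimately show ?thesis using e by simp
qed

lemma ext_code_tail_of_support_three:
  fixes \<mu> :: "nat \<Rightarrow> 'a::field"
  assumes v: "v \<in> ext_code q e \<mu>" and A: "{i. i < q \<and> v i \<noteq> 0} = {a, b, c}"
    and abc: "a \<noteq> b" "b \<noteq> c" "a \<noteq> c" and \<mu>: "\<mu> a \<noteq> 0" and inj: "inj_on e {..<q}"
  shows "v q \<noteq> 0 \<or> v (Suc q) \<noteq> 0"
proof (rule ccontr)
  assume "\<not> ?thesis"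
  then have tail: "v q = 0" "v (Suc q) = 0" by auto
  have sums: "(\<Sum>i<q. f i * v i) = f a * v a + f b * v b + f c * v c" for f
    using sum_lessThan_support[where q=q and f=f and v=v] A abc by (simp add: add.assoc)
  have "a < q" "b < q" "c < q" "v a \<noteq> 0" using A by auto
  then have "e a \<noteq> e b" "e b \<noteq> e c" "e a \<noteq> e c"
    using inj abc by (auto dest: inj_onD)
  then have "\<mu> a * v a = 0 \<and> \<mu> b * v b = 0 \<and> \<mu> c * v c = 0"
    using v tail sums[of \<mu>] sums[of "\<lambda>i. \<mu> i * e i"] sums[of "\<lambda>i. \<mu> i * e i ^ 2"]
    by (intro vandermonde3_eq_0) (auto simp: ext_code_def algebra_simps)
  then show False using \<open>v a \<noteq> 0\<close> \<mu> by simp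
qed

lemma four_le_hamming_weight_ext_code:
  fixes \<mu> :: "nat \<Rightarrow> 'a::field"
  assumes \<mu>: "\<And>i. i < q \<Longrightarrow> \<mu> i \<noteq> 0" and inj: "inj_on e {..<q}" and two: "(2::'a) = 0"
    and v: "v \<in> ext_code q e \<mu>" "v \<noteq> 0"
  shows "4 \<le> hamming_weight (q + 2) v"
proof -
  define A where "A = {i. i < q \<and> v i \<noteq> 0}"
  have weight: "hamming_weight (q + 2) v
      = card A + (if v q = 0 then 0 else 1) + (if v (Suc q) = 0 then 0 else 1)"
    unfolding add_2_eq_Suc' hamming_weight_Suc by (simp add: A_def hamming_weight_def)
  have A_sub: "A \<subseteq> {..<q}" and "finite A" by (auto simp: A_def)
  consider "card A = 0" | "card A = 1" | "card A = 2" | "card A = 3" | "4 \<le> card A" by linarith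
  then show ?thesis
  proof cases
    case 1
    then have "v = 0" using ext_code_eq_0[OF v(1)] \<open>finite A\<close> by (auto simp: A_def)
    with v(2) show ?thesis by simp
  next
    case 2
    then obtain a where a: "A = {a}" by (auto simp: card_1_singleton_iff)
    then have "\<mu> a * v a = 0"
      using v(1) sum_lessThan_support[where q=q and f=\<mu> and v=v] by (simp add: ext_code_def A_def)
    with a \<mu> show ?thesis by (auto simp: A_def)
  next
    case 3
    then obtain a b where ab: "A = {a, b}" "a \<noteq> b" by (auto simp: card_2_iff)
    then have "e a \<noteq> e b" using inj A_sub by (auto dest: inj_onD)
    then have "v q \<noteq> 0 \<and> v (Suc q) \<noteq> 0"
      using ab A_sub \<mu> by (intro ext_code_tail_of_support_two[OF v(1) _ ab(2) _ _ two]) (auto simp: A_def)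
    then show ?thesis using weight 3 by simp
  next
    case 4
    then obtain a b c where abc: "A = {a, b, c}" "a \<noteq> b" "b \<noteq> c" "a \<noteq> c"
      by (auto simp: card_3_iff)
    then have "v q \<noteq> 0 \<or> v (Suc q) \<noteq> 0"
      using A_sub \<mu> by (intro ext_code_tail_of_support_three[OF v(1) _ abc(2-4) _ inj]) (auto simp: A_def)
    then show ?thesis using weight 4 by auto
  next
    case 5
    then show ?thesis using weight by simp
  qed
qed

lemma dim_ext_code_vanishing:
  fixes \<mu> :: "nat \<Rightarrow> 'a::field"
  assumes \<mu>: "\<And>i. i < q \<Longrightarrow> \<mu> i \<noteq> 0" and q: "0 < q" and T: "T \<subseteq> {1..<q}"
  shows "fv.dim {v \<in> ext_code q e \<mu>. \<forall>i\<in>T. v i = 0} = q - 1 - card T"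
proof -
  let ?W = "{v \<in> ext_code q e \<mu>. \<forall>i\<in>T. v i = 0}"
  have "fv.dim ?W = card ({1..<q} - T)"
  proof (rule dim_eq_card_coordinates[where b = "\<lambda>s. pair_word q e \<mu> s 0"])
    show "fv.subspace ?W" by (intro subspace_vanishing subspace_ext_code)
    show "pair_word q e \<mu> s 0 \<in> ?W" if "s \<in> {1..<q} - T" for s
    proof -
      have "pair_word q e \<mu> s 0 \<in> ext_code q e \<mu>"
        using that \<mu> q by (intro pair_word_in_ext_code) auto
      moreover have "\<forall>i\<in>T. pair_word q e \<mu> s 0 i = 0"
        using that T by (auto simp: pair_word_def)
      ultimately show ?thesis by simp
    qed
    show "pair_word q e \<mu> s 0 t = (if s = t then 1 else 0)" if "s \<in> {1..<q} - T" "t \<in> {1..<q} - T" for s t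
      using that by (auto simp: pair_word_def)
    show "v = 0" if v: "v \<in> ?W" and zero: "\<forall>s\<in>{1..<q} - T. v s = 0" for v
    proof (rule ext_code_eq_0[where e = e and \<mu> = \<mu>])
      have head: "v i = 0" if "0 < i" "i < q" for i using v zero that by auto
      have "(\<Sum>i<q. \<mu> i * v i) = (\<Sum>i\<in>{0}. \<mu> i * v i)"
        using q head by (intro sum.mono_neutral_right) auto
      then have "\<mu> 0 * v 0 = 0" using v by (simp add: ext_code_def)
      then show "v i = 0" if "i < q" for i using head \<mu>[OF q] that by (cases "i = 0") auto
    qed (use v in simp)
  qed simp
  then show ?thesis using T by (simp add: card_Diff_subset finite_subset)
qed

lemma ext_code_MDS:
  fixes \<mu> :: "nat \<Rightarrow> 'a::field"
  assumes \<mu>: "\<And>i. i < q \<Longrightarrow> \<mu> i \<noteq> 0" and inj: "inj_on e {..<q}" and two: "(2::'a) = 0"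
    and q: "2 \<le> q"
  shows "linear_code (q + 2) (q - 1) 4 (ext_code q e \<mu>) \<and> is_MDS (q + 2) (ext_code q e \<mu>)"
proof -
  have "code_dim (ext_code q e \<mu>) = q - 1"
    using dim_ext_code_vanishing[where T="{}" and e=e, OF \<mu>] q by (simp add: code_dim_def)
  moreover have "min_dist (q + 2) (ext_code q e \<mu>) = 4"
  proof (rule min_dist_eqI[OF subspace_ext_code])
    have "e 1 \<noteq> e 0" using inj q by (auto dest: inj_onD)
    then show "hamming_weight (q + 2) (pair_word q e \<mu> 1 0) = 4"
      using q \<mu> two by (intro hamming_weight_pair_word) auto
    show "pair_word q e \<mu> 1 0 \<in> ext_code q e \<mu>" using q \<mu> by (intro pair_word_in_ext_code) auto
    show "pair_word q e \<mu> 1 0 \<noteq> 0" by (auto simp: pair_word_def fun_eq_iff)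
  qed (rule four_le_hamming_weight_ext_code[OF \<mu> inj two])
  moreover have "ext_code q e \<mu> \<subseteq> fvecs (q + 2)" by (auto simp: ext_code_def)
  ultimately show ?thesis using subspace_ext_code[of q e \<mu>] q
    by (simp add: linear_code_def is_MDS_def)
qed

lemma ext_code_inter_rescaled:
  fixes \<mu> :: "nat \<Rightarrow> 'a::field" and \<kappa> :: 'a
  assumes \<kappa>: "\<kappa> \<noteq> 1" and \<mu>: "\<And>i. i < q \<Longrightarrow> \<mu> i \<noteq> 0" and inj: "inj_on e {..<q}"
    and T: "T \<subseteq> {a, b, c}" and abc: "a < q" "b < q" "c < q" "a \<noteq> b" "b \<noteq> c" "a \<noteq> c"
  shows "ext_code q e \<mu> \<inter> ext_code q e (\<lambda>i. if i \<in> T then \<kappa> * \<mu> i else \<mu> i)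
       = {v \<in> ext_code q e \<mu>. \<forall>i\<in>T. v i = 0}" (is "?C \<inter> ?C' = ?W")
proof
  let ?\<mu>' = "\<lambda>i. if i \<in> T then \<kappa> * \<mu> i else \<mu> i"
  show "?W \<subseteq> ?C \<inter> ?C'"
  proof
    fix v assume v: "v \<in> ?W"
    then have same: "?\<mu>' i * v i = \<mu> i * v i" "?\<mu>' i * x * v i = \<mu> i * x * v i" for i x
      by auto
    show "v \<in> ?C \<inter> ?C'" using v by (simp add: ext_code_def same)
  qed
  show "?C \<inter> ?C' \<subseteq> ?W"
  proof
    fix v assume v: "v \<in> ?C \<inter> ?C'"
    define t where "t i = (if i \<in> T then \<mu> i * v i else 0)" for i
    have "?\<mu>' i * e i ^ k * v i = \<mu> i * e i ^ k * v i + (\<kappa> - 1) * (e i ^ k * t i)" for i k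
      by (simp add: t_def algebra_simps)
    then have rescale: "(\<Sum>i<q. ?\<mu>' i * e i ^ k * v i)
        = (\<Sum>i<q. \<mu> i * e i ^ k * v i) + (\<kappa> - 1) * (\<Sum>i<q. e i ^ k * t i)" for k
      by (simp add: sum.distrib sum_distrib_left)
    have moment: "(\<Sum>i<q. e i ^ k * t i) = 0" if "k \<le> 2" for k
    proof -
      have "k = 0 \<or> k = 1 \<or> k = 2" using that by auto
      then have "(\<Sum>i<q. ?\<mu>' i * e i ^ k * v i) = (\<Sum>i<q. \<mu> i * e i ^ k * v i)"
        using v by (auto simp: ext_code_def)
      then show ?thesis using rescale[of k] \<kappa> by simp
    qed
    have "(\<Sum>i<q. e i ^ k * t i) = (\<Sum>i\<in>{a, b, c}. e i ^ k * t i)" for k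
      using T abc by (intro sum.mono_neutral_right) (auto simp: t_def)
    then have abc_moment: "t a * e a ^ k + t b * e b ^ k + t c * e c ^ k = 0" if "k \<le> 2" for k
      using moment[OF that] abc by (simp add: algebra_simps)
    have "e a \<noteq> e b" "e b \<noteq> e c" "e a \<noteq> e c" using inj abc by (auto dest: inj_onD)
    then have "t a = 0 \<and> t b = 0 \<and> t c = 0"
      using abc_moment[of 0] abc_moment[of 1] abc_moment[of 2] by (intro vandermonde3_eq_0) auto
    then have "\<forall>i\<in>T. v i = 0" using T \<mu> abc by (auto simp: t_def)
    then show "v \<in> ?W" using v by simp
  qed
qed

lemma ext_code_intersection_pair:
  fixes e :: "nat \<Rightarrow> 'a::field" and \<kappa> :: 'a
  assumes two: "(2::'a) = 0" and inj: "inj_on e {..<q}" and q: "4 \<le> q"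
    and \<kappa>: "\<kappa> \<noteq> 0" "\<kappa> \<noteq> 1" and l: "q - 4 \<le> l" "l \<le> q - 1"
  shows "\<exists>C1 C2 :: (nat \<Rightarrow> 'a) set.
           linear_code (q + 2) (q - 1) 4 C1 \<and> linear_code (q + 2) (q - 1) 4 C2
         \<and> is_MDS (q + 2) C1 \<and> is_MDS (q + 2) C2
         \<and> l_intersection_pair l C1 C2"
proof -
  define T where "T = {1..q - 1 - l}"
  define \<mu> where "\<mu> = (\<lambda>i. if i \<in> T then \<kappa> else 1)"
  have T: "T \<subseteq> {1, 2, 3}" "T \<subseteq> {1..<q}" "card T = q - 1 - l"
    using l q by (auto simp: T_def)
  let ?C1 = "ext_code q e (\<lambda>_. 1)" and ?C2 = "ext_code q e \<mu>"
  have "linear_code (q + 2) (q - 1) 4 ?C1 \<and> is_MDS (q + 2) ?C1"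
    and "linear_code (q + 2) (q - 1) 4 ?C2 \<and> is_MDS (q + 2) ?C2"
    using q \<kappa> by (intro ext_code_MDS[OF _ inj two]; simp add: \<mu>_def)+
  moreover have "?C1 \<inter> ?C2 = {v \<in> ?C1. \<forall>i\<in>T. v i = 0}"
    using ext_code_inter_rescaled[where \<mu> = "\<lambda>_. 1", OF \<kappa>(2) _ inj T(1)] q
    by (simp add: \<mu>_def cong: if_cong)
  then have "code_dim (?C1 \<inter> ?C2) = l"
    using dim_ext_code_vanishing[where \<mu> = "\<lambda>_. 1" and e = e] T q l by (simp add: code_dim_def)
  ultimately show ?thesis unfolding l_intersection_pair_def by blast
qed

theorem theorem5:
  fixes m :: nat and l :: nat
  assumes "card (UNIV :: 'a::{field,finite} set) = 2 ^ m"
    and "2 ^ m \<ge> (4::nat)"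
    and "2 ^ m - 4 \<le> l" and "l \<le> 2 ^ m - 1"
  shows "\<exists>C1 C2 :: (nat \<Rightarrow> 'a) set.
           linear_code (2^m + 2) (2^m - 1) 4 C1 \<and> linear_code (2^m + 2) (2^m - 1) 4 C2
         \<and> is_MDS (2^m + 2) C1 \<and> is_MDS (2^m + 2) C2
         \<and> l_intersection_pair l C1 C2"
proof -
  have "m > 0" using assms(2) by (cases m) auto
  then have two: "(2::'a) = 0" using char_two_of_card assms(1) by blast
  obtain e :: "nat \<Rightarrow> 'a" where "bij_betw e {..<2 ^ m} UNIV"
    using ex_bij_betw_nat_finite[of "UNIV :: 'a set"] assms(1) by (auto simp: atLeast0LessThan)
  then have inj: "inj_on e {..<2 ^ m}" by (rule bij_betw_imp_inj_on)
  have "card {0, 1 :: 'a} < card (UNIV :: 'a set)" using assms(1,2) by simp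
  then obtain \<kappa> :: 'a where "\<kappa> \<notin> {0, 1}" by (metis UNIV_I less_irrefl subsetI subset_antisym)
  then show ?thesis using ext_code_intersection_pair[OF two inj assms(2)] assms(3,4) by blast
qed

end
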